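(* Let $(R,\mathfrak{m})$ be a commutative Artinian local ring with identity, $\mathfrak{m}\neq0$ and $\mathfrak{m}^2=0$. For every integer $n\ge7$, $3\in L(x^n)$.
   Context: A nonunit polynomial in $R[x]$ is irreducible if in any factorization into two polynomials one factor is a unit of $R[x]$. A positive integer $k$ is a length of $f$ if $f$ is a product of $k$ irreducible polynomials of $R[x]$; $L(f)$ denotes the set of lengths of $f$. *)

theory Defs
  imports "HOL-Computational_Algebra.Polynomial" "HOL-Computational_Algebra.Factorial_Ring"
begin

definition is_ideal :: "'a::comm_ring_1 set \<Rightarrow> bool" where
  "is_ideal I \<longleftrightarrow> 0 \<in> I \<and> (\<forall>a\<in>I. \<forall>b\<in>I. a + b \<in> I) \<and> (\<forall>a\<in>I. \<forall>r. r * a \<in> I)"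

definition artinian_ring :: "'a::comm_ring_1 itself \<Rightarrow> bool" where
  "artinian_ring _ \<longleftrightarrow>
     (\<forall>f :: nat \<Rightarrow> 'a set. (\<forall>n. is_ideal (f n)) \<and> (\<forall>n. f (Suc n) \<subseteq> f n)
        \<longrightarrow> (\<exists>N. \<forall>n\<ge>N. f n = f N))"

text \<open>Local ring: the nonunits form an ideal (it is then the unique maximal ideal).\<close>
definition local_ring :: "'a::comm_ring_1 itself \<Rightarrow> bool" where
  "local_ring _ \<longleftrightarrow> is_ideal {a :: 'a. \<not> a dvd 1}"

definition max_ideal :: "'a::comm_ring_1 set" where
  "max_ideal = {a. \<not> a dvd 1}"

definition lengths :: "'a::comm_ring_1 poly \<Rightarrow> nat set" where
  "lengths f = {k. k > 0 \<and> (\<exists>ps. length ps = k \<and> (\<forall>p\<in>set ps. irreducible p) \<and> prod_list ps = f)}"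

end

theory Submission imports Defs begin

text \<open>Write \<open>n = p + 2q\<close> with \<open>0 < p < q\<close> (possible for \<open>n \<ge> 7\<close>) and pick a nonzero \<open>a\<close> in the maximal ideal \<open>\<m>\<close>.
  Since \<open>a\<^sup>2 = 0\<close>, the identity
  \<open>x\<^sup>n = (x\<^sup>p + a)(x\<^sup>q + a)(x\<^sup>q - a x\<^sup>q\<^sup>-\<^sup>p - a)\<close> holds. Each factor has exactly one unit
  coefficient, in positive degree, and a nonzero constant term. Because the nonunits form
  an ideal, the lowest and the highest unit-coefficient degrees of a product are the sums
  of those of the factors; so in any factorisation both factors have a single unit
  coefficient, and the nonzero constant term, a product of the two constant terms, forces
  one factor to have its unit coefficient in degree 0. As \<open>\<m>\<^sup>2 = 0\<close>, such a polynomial is a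
  unit plus a square-zero polynomial, hence a unit.\<close>

lemma ideal_sum_mem:
  assumes "is_ideal I" "\<And>i. i \<in> A \<Longrightarrow> f i \<in> I"
  shows "sum f A \<in> I"
proof (cases "finite A")
  case True
  then show ?thesis using assms(2)
    by (induction A rule: finite_induct) (use assms(1) in \<open>auto simp: is_ideal_def\<close>)
next
  case False
  then show ?thesis using assms(1) by (simp add: is_ideal_def)
qed

lemma local_ring_unit_add_nonunit:
  fixes u m :: "'a::comm_ring_1"
  assumes "local_ring TYPE('a)" "u dvd 1" "\<not> m dvd 1"
  shows "(u + m) dvd 1"
proof (rule ccontr)
  have I: "is_ideal {a::'a. \<not> a dvd 1}" using assms(1) by (simp add: local_ring_def)
  assume "\<not> (u + m) dvd 1"
  moreover have "\<not> ((-1) * m) dvd 1" using I assms(3) unfolding is_ideal_def by blast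
  ultimately have "\<not> ((u + m) + (-1) * m) dvd 1" using I unfolding is_ideal_def by blast
  then show False using assms(2) by simp
qed

lemma Min_eq_Max_imp_singleton:
  fixes S :: "'a::linorder set"
  assumes "finite S" "S \<noteq> {}" "Min S = Max S"
  shows "S = {Min S}"
proof -
  have "x = Min S" if "x \<in> S" for x
    using assms that by (metis Max_ge Min_le antisym)
  then show ?thesis using Min_in assms(1,2) by blast
qed

definition unit_degrees :: "'a::comm_ring_1 poly \<Rightarrow> nat set" where
  "unit_degrees g = {i. coeff g i dvd 1}"

lemma finite_unit_degrees: "finite (unit_degrees g)"
proof (rule finite_subset)
  show "unit_degrees g \<subseteq> {..degree g}"
    by (auto simp: unit_degrees_def intro!: le_degree)
qed simp

lemma coeff_mult_unit_single_term:
  fixes g h :: "'a::comm_ring_1 poly"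
  assumes local: "local_ring TYPE('a)"
    and "i \<le> n" "i \<in> unit_degrees g" "n - i \<in> unit_degrees h"
    and others: "\<And>j. j \<le> n \<Longrightarrow> j \<noteq> i \<Longrightarrow> j \<in> unit_degrees g \<Longrightarrow> n - j \<notin> unit_degrees h"
  shows "n \<in> unit_degrees (g * h)"
proof -
  have "coeff (g * h) n = coeff g i * coeff h (n - i) + (\<Sum>j\<in>{..n}-{i}. coeff g j * coeff h (n - j))"
    unfolding coeff_mult using assms(2) by (simp add: sum.remove)
  moreover have "(\<Sum>j\<in>{..n}-{i}. coeff g j * coeff h (n - j)) \<in> {a. \<not> a dvd 1}"
    using local others unfolding local_ring_def unit_degrees_def
    by (intro ideal_sum_mem) (auto dest: dvd_mult_left dvd_mult_right)
  moreover have "(coeff g i * coeff h (n - i)) dvd 1"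
    using assms(3,4) unfolding unit_degrees_def by (metis mem_Collect_eq mult_dvd_mono mult_1_left)
  ultimately show ?thesis
    using local_ring_unit_add_nonunit[OF local] by (simp add: unit_degrees_def)
qed

lemma Max_unit_degrees_mult:
  fixes g h :: "'a::comm_ring_1 poly"
  assumes "local_ring TYPE('a)" "unit_degrees g \<noteq> {}" "unit_degrees h \<noteq> {}"
  shows "Max (unit_degrees g) + Max (unit_degrees h) \<in> unit_degrees (g * h)"
proof (rule coeff_mult_unit_single_term[OF assms(1)])
  fix j
  assume "j \<noteq> Max (unit_degrees g)" "j \<in> unit_degrees g"
  then have "j < Max (unit_degrees g)"
    using Max_ge[OF finite_unit_degrees] le_neq_implies_less by blast
  then have "Max (unit_degrees h) < Max (unit_degrees g) + Max (unit_degrees h) - j"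
    by linarith
  then show "Max (unit_degrees g) + Max (unit_degrees h) - j \<notin> unit_degrees h"
    using Max_ge[OF finite_unit_degrees] not_le by blast
qed (use assms in \<open>simp_all add: Max_in finite_unit_degrees\<close>)

lemma Min_unit_degrees_mult:
  fixes g h :: "'a::comm_ring_1 poly"
  assumes "local_ring TYPE('a)" "unit_degrees g \<noteq> {}" "unit_degrees h \<noteq> {}"
  shows "Min (unit_degrees g) + Min (unit_degrees h) \<in> unit_degrees (g * h)"
proof (rule coeff_mult_unit_single_term[OF assms(1)])
  fix j
  assume "j \<le> Min (unit_degrees g) + Min (unit_degrees h)"
    "j \<noteq> Min (unit_degrees g)" "j \<in> unit_degrees g"
  moreover from this have "Min (unit_degrees g) < j"
    using Min_le[OF finite_unit_degrees] le_neq_implies_less by metis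
  ultimately have "Min (unit_degrees g) + Min (unit_degrees h) - j < Min (unit_degrees h)"
    by linarith
  then show "Min (unit_degrees g) + Min (unit_degrees h) - j \<notin> unit_degrees h"
    using Min_le[OF finite_unit_degrees] not_le by blast
qed (use assms in \<open>simp_all add: Min_in finite_unit_degrees\<close>)

lemma unit_degrees_mult_empty:
  fixes g h :: "'a::comm_ring_1 poly"
  assumes "local_ring TYPE('a)" "unit_degrees g = {}"
  shows "unit_degrees (g * h) = {}"
proof -
  have "(\<Sum>i\<le>n. coeff g i * coeff h (n - i)) \<in> {a. \<not> a dvd 1}" for n
    using assms unfolding local_ring_def unit_degrees_def
    by (intro ideal_sum_mem) (auto dest: dvd_mult_left)
  then show ?thesis by (auto simp: unit_degrees_def coeff_mult)
qed

lemma unit_degrees_mult_singleton: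
  fixes g h :: "'a::comm_ring_1 poly"
  assumes local: "local_ring TYPE('a)" and gh: "unit_degrees (g * h) = {p}"
  shows "\<exists>s t. unit_degrees g = {s} \<and> unit_degrees h = {t} \<and> s + t = p"
proof -
  have ne: "unit_degrees g \<noteq> {}" "unit_degrees h \<noteq> {}"
    using unit_degrees_mult_empty[OF local, of g h] unit_degrees_mult_empty[OF local, of h g] gh
    by (auto simp: mult.commute)
  have "Max (unit_degrees g) + Max (unit_degrees h) = p"
    "Min (unit_degrees g) + Min (unit_degrees h) = p"
    using Max_unit_degrees_mult[OF local ne] Min_unit_degrees_mult[OF local ne] gh by auto
  moreover have "Min (unit_degrees g) \<le> Max (unit_degrees g)" "Min (unit_degrees h) \<le> Max (unit_degrees h)"
    using ne finite_unit_degrees by (meson Max_ge Min_in)+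
  ultimately have "Min (unit_degrees g) = Max (unit_degrees g)" "Min (unit_degrees h) = Max (unit_degrees h)"
    by linarith+
  then have "unit_degrees g = {Min (unit_degrees g)}" "unit_degrees h = {Min (unit_degrees h)}"
    using ne finite_unit_degrees Min_eq_Max_imp_singleton by metis+
  then show ?thesis using \<open>Min (unit_degrees g) + Min (unit_degrees h) = p\<close> by blast
qed

lemma unit_degrees_zero_imp_unit:
  fixes g :: "'a::comm_ring_1 poly"
  assumes sq: "\<forall>a\<in>max_ideal. \<forall>b\<in>max_ideal. a * b = (0::'a)" and U: "unit_degrees g = {0}"
  shows "g dvd 1"
proof -
  define c where "c = coeff g 0"
  have "c dvd 1" using U unfolding unit_degrees_def c_def by auto
  then obtain c' where cc': "1 = c * c'" by (auto simp: dvd_def)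
  define N where "N = g - [:c:]"
  have "\<not> coeff N i dvd 1" for i
    using U by (cases i) (auto simp: N_def c_def unit_degrees_def)
  then have NN: "N * N = 0"
    using sq by (intro poly_eqI) (simp add: coeff_mult max_ideal_def)
  \<comment> \<open>\<open>c + N\<close> with \<open>N\<^sup>2 = 0\<close> has inverse \<open>c\<^sup>-\<^sup>1 - c\<^sup>-\<^sup>2 N\<close>\<close>
  have "g = [:c:] + N" by (simp add: N_def)
  then have "g * ([:c':] - smult (c' * c') N) = [:c * c':] + smult c' N - smult (c * c' * c') N - smult (c' * c') (N * N)"
    by (simp add: algebra_simps smult_add_right)
  also have "\<dots> = 1" using cc' NN by (simp add: mult.commute)
  finally show ?thesis by (metis dvdI)
qed

lemma irreducible_single_unit_coeff:
  fixes f :: "'a::comm_ring_1 poly"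
  assumes local: "local_ring TYPE('a)" and sq: "\<forall>a\<in>max_ideal. \<forall>b\<in>max_ideal. a * b = (0::'a)"
    and Uf: "unit_degrees f = {p}" and "p > 0" and f0: "coeff f 0 \<noteq> 0"
  shows "irreducible f"
proof (rule irreducibleI)
  show "f \<noteq> 0" using f0 by auto
  show "\<not> f dvd 1"
  proof
    assume "f dvd 1"
    then obtain g where "f * g = 1" by (metis dvdE)
    moreover have "unit_degrees (1 :: 'a poly) = {0}"
      by (auto simp: unit_degrees_def split: if_splits)
    ultimately show False
      using unit_degrees_mult_singleton[OF local, of f g 0] Uf \<open>p > 0\<close> by auto
  qed
  fix g h assume fgh: "f = g * h"
  then obtain s t where st: "unit_degrees g = {s}" "unit_degrees h = {t}"
    using unit_degrees_mult_singleton[OF local] Uf by blast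
  have "coeff f 0 = coeff g 0 * coeff h 0" using fgh by (simp add: coeff_mult)
  then have "coeff g 0 dvd 1 \<or> coeff h 0 dvd 1" using sq f0 by (auto simp: max_ideal_def)
  then have "unit_degrees g = {0} \<or> unit_degrees h = {0}"
    using st by (auto simp: unit_degrees_def)
  then show "g dvd 1 \<or> h dvd 1" using unit_degrees_zero_imp_unit[OF sq] by blast
qed

lemma square_zero_factorization:
  fixes y z A :: "'a::comm_ring_1"
  assumes "A * A = 0"
  shows "(z + A) * (y * z + A) * (y * z - A - A * y) = y\<^sup>2 * z ^ 3"
proof -
  have "(z + A) * (y * z + A) * (y * z - A - A * y) = y\<^sup>2 * z ^ 3 - (A * A) * (z + y * z + y * y * z + A + A * y)"
    by (simp add: algebra_simps power2_eq_square power3_eq_cube)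
  then show ?thesis using assms by simp
qed

lemma unit_degrees_monom_one_add:
  fixes g :: "'a::comm_ring_1 poly"
  assumes "local_ring TYPE('a)" "\<And>i. coeff g i \<in> max_ideal"
  shows "unit_degrees (monom 1 k + g) = {k}"
  using assms local_ring_unit_add_nonunit[OF assms(1), of 1]
  by (auto simp: unit_degrees_def max_ideal_def coeff_monom)

lemma irreducible_monom_one_add:
  fixes g :: "'a::comm_ring_1 poly"
  assumes "local_ring TYPE('a)" "\<forall>a\<in>max_ideal. \<forall>b\<in>max_ideal. a * b = (0::'a)"
    and "k > 0" "\<And>i. coeff g i \<in> max_ideal" "coeff g 0 \<noteq> 0"
  shows "irreducible (monom 1 k + g)"
  by (rule irreducible_single_unit_coeff[OF assms(1,2) unit_degrees_monom_one_add[OF assms(1,4)]])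
    (use assms in simp_all)

lemma nat_decomp_add_double_gt:
  assumes "(7::nat) \<le> n"
  obtains p q where "0 < p" "p < q" "n = p + 2 * q"
proof (cases "even n")
  case True
  then obtain k where "n = 2 * k" by blast
  then show ?thesis using that[of 2 "k - 1"] assms by auto
next
  case False
  then obtain k where "n = 2 * k + 1" using oddE by blast
  then show ?thesis using that[of 1 k] assms by auto
qed

theorem lemma4p12:
  fixes n :: nat
  assumes "artinian_ring TYPE('a::comm_ring_1)"
    and "local_ring TYPE('a)"
    and "max_ideal \<noteq> {0 :: 'a}"
    and "\<forall>a\<in>(max_ideal :: 'a set). \<forall>b\<in>max_ideal. a * b = 0"
    and "n \<ge> 7"
  shows "3 \<in> lengths ([:0, 1:] ^ n :: 'a poly)"
proof -
  obtain a :: 'a where a: "a \<in> max_ideal" "a \<noteq> 0"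
    using assms(3) by (auto simp: max_ideal_def)
  obtain p q where pq: "0 < p" "p < q" "n = p + 2 * q"
    using nat_decomp_add_double_gt assms(5) by blast
  define f1 f2 f3 :: "'a poly"
    where "f1 = monom 1 p + [:a:]" and "f2 = monom 1 q + [:a:]"
      and "f3 = monom 1 q + (- [:a:] - monom a (q - p))"
  have "coeff [:a:] i \<in> max_ideal" "coeff (- [:a:] - monom a (q - p)) i \<in> max_ideal" for i
    using a pq by (auto simp: max_ideal_def coeff_pCons coeff_monom split: nat.split)
  then have "irreducible f1" "irreducible f2" "irreducible f3"
    unfolding f1_def f2_def f3_def using a pq
    by (auto intro!: irreducible_monom_one_add[OF assms(2,4)])
  moreover have "f1 * f2 * f3 = [:0, 1:] ^ n"
  proof -
    define y z A where "y = monom (1::'a) (q - p)" and "z = monom (1::'a) p" and "A = [:a:]"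
    have "A * A = 0" using a assms(4) by (simp add: A_def)
    moreover have "f1 = z + A" "f2 = y * z + A" "f3 = y * z - A - A * y"
      using pq by (simp_all add: f1_def f2_def f3_def y_def z_def A_def mult_monom smult_monom)
    ultimately have "f1 * f2 * f3 = y\<^sup>2 * z ^ 3" by (simp add: square_zero_factorization)
    also have "\<dots> = monom 1 ((q - p) * 2 + p * 3)"
      by (simp add: y_def z_def mult_monom monom_power)
    also have "(q - p) * 2 + p * 3 = n" using pq by simp
    finally show ?thesis by (simp add: monom_altdef)
  qed
  ultimately show ?thesis
    unfolding lengths_def by (intro CollectI conjI exI[of _ "[f1, f2, f3]"]) (auto simp: mult.assoc)
qed

end
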